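(* Let $p\ge 2$, $\delta_i\ge 0$ and $g_i(t)=\frac1p(|t|-\delta_i)_+^p$ for $t\in\mathbb{R}$. For every $T\ge \delta_i$, \[ g''_{i}(t)\ge (p-1)\,\left(\frac{T-\delta_i}{T}\right)^{p-2}\,\left(T^2+(|t|-T)_+^2\right)^\frac{p-2}{2}\qquad\text{for every } |t|\ge T. \]
   Context: $(\cdot)_+$ denotes the positive part; $g_i''(t)=(p-1)(|t|-\delta_i)_+^{p-2}$ for $|t|>\delta_i$. *)

theory Defs
  imports "HOL-Analysis.Analysis"
begin

definition pos_part :: "real \<Rightarrow> real" where
  "pos_part x = max x 0"

definition gfun :: "real \<Rightarrow> real \<Rightarrow> real \<Rightarrow> real" where
  "gfun p \<delta> t = (1 / p) * (pos_part (\<bar>t\<bar> - \<delta>)) powr p"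

text \<open>Its second derivative, as given in the paper's context:
  g''(t) = (p-1) ((|t| - delta)_+)^(p-2).\<close>
definition gpp :: "real \<Rightarrow> real \<Rightarrow> real \<Rightarrow> real" where
  "gpp p \<delta> t = (p - 1) * (pos_part (\<bar>t\<bar> - \<delta>)) powr (p - 2)"

end

theory Submission
  imports Defs
begin

text \<open>Write \<open>s = \<bar>t\<bar> \<ge> T\<close>. Then \<open>T\<^sup>2 + (s - T)\<^sup>2 \<le> s\<^sup>2\<close>, and since
  \<open>(T - \<delta>)/T \<le> (s - \<delta>)/s\<close> the right-hand side is at most
  \<open>(p - 1) ((s - \<delta>)/s)\<^bsup>p-2\<^esup> s\<^bsup>p-2\<^esup> = g''(t)\<close>.\<close>

lemma pos_part_of_nonneg: "x \<ge> 0 \<Longrightarrow> pos_part x = x"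
  by (simp add: pos_part_def)

lemma sq_plus_sq_diff_le_sq:
  fixes T s :: real
  assumes "0 \<le> T" "T \<le> s"
  shows "T\<^sup>2 + (s - T)\<^sup>2 \<le> s\<^sup>2"
proof -
  have "T * T \<le> T * s" using assms by (simp add: mult_left_mono)
  then show ?thesis by (simp add: power2_eq_square algebra_simps)
qed

lemma sq_plus_sq_diff_powr_half_le:
  fixes T s q :: real
  assumes "0 \<le> T" "T \<le> s" "0 \<le> q"
  shows "(T\<^sup>2 + (s - T)\<^sup>2) powr (q / 2) \<le> s powr q"
proof -
  have "(T\<^sup>2 + (s - T)\<^sup>2) powr (q / 2) \<le> (s\<^sup>2) powr (q / 2)"
    using sq_plus_sq_diff_le_sq[OF assms(1,2)] assms(3) by (intro powr_mono2) auto
  also have "\<dots> = (s powr 2) powr (q / 2)"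
    using assms by (simp add: powr_realpow)
  also have "\<dots> = s powr q"
    by (simp add: powr_powr)
  finally show ?thesis .
qed

text \<open>For \<open>T = 0\<close> the ratio is \<open>0/0 = 0\<close>, and the claim still holds since then \<open>\<delta> = 0\<close>.\<close>

lemma diff_ratio_mult_le_diff:
  fixes \<delta> T s :: real
  assumes "0 \<le> \<delta>" "\<delta> \<le> T" "T \<le> s"
  shows "(T - \<delta>) / T * s \<le> s - \<delta>"
proof (cases "T = 0")
  case False
  then have "T > 0" using assms by linarith
  have "\<delta> * T \<le> \<delta> * s" using assms by (simp add: mult_left_mono)
  then have "(T - \<delta>) * s \<le> (s - \<delta>) * T" by (simp add: algebra_simps)
  then show ?thesis using \<open>T > 0\<close> by (simp add: divide_le_eq)
qed (use assms in simp)

theorem lemmaA3: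
  fixes p \<delta> T t :: real
  assumes "p \<ge> 2" and "\<delta> \<ge> 0" and "T \<ge> \<delta>" and "\<bar>t\<bar> \<ge> T"
  shows "gpp p \<delta> t \<ge> (p - 1) * ((T - \<delta>) / T) powr (p - 2)
           * (T\<^sup>2 + (pos_part (\<bar>t\<bar> - T))\<^sup>2) powr ((p - 2) / 2)"
proof -
  define s where "s = \<bar>t\<bar>"
  define a where "a = (T - \<delta>) / T"
  have T: "0 \<le> T" "T \<le> s" and q: "0 \<le> p - 2" using assms s_def by auto
  have a: "0 \<le> a" using a_def assms by simp
  have "a powr (p - 2) * (T\<^sup>2 + (s - T)\<^sup>2) powr ((p - 2) / 2) \<le> a powr (p - 2) * s powr (p - 2)"
    using sq_plus_sq_diff_powr_half_le[OF T q] by (intro mult_left_mono) auto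
  also have "\<dots> = (a * s) powr (p - 2)"
    using a T by (simp add: powr_mult)
  also have "\<dots> \<le> (s - \<delta>) powr (p - 2)"
    using diff_ratio_mult_le_diff[of \<delta> T s] assms a T q unfolding a_def
    by (intro powr_mono2) auto
  finally have "(p - 1) * (a powr (p - 2) * (T\<^sup>2 + (s - T)\<^sup>2) powr ((p - 2) / 2))
      \<le> (p - 1) * (s - \<delta>) powr (p - 2)"
    using assms by (intro mult_left_mono) auto
  moreover have "pos_part (\<bar>t\<bar> - T) = s - T" "pos_part (\<bar>t\<bar> - \<delta>) = s - \<delta>"
    using assms s_def by (simp_all add: pos_part_of_nonneg)
  ultimately show ?thesis
    unfolding gpp_def a_def by (simp add: mult.assoc)
qed

end
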